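(* Let $\varphi$ be an ${\cal X}_5$ formula in which the atom $p$ occurs only outside the scope of explicit negation $\sim$, and let $\alpha,\beta$ be formulas such that $\alpha\leftrightarrow\beta$ is valid. Then $\varphi[\alpha/p]\leftrightarrow\varphi[\beta/p]$ is valid.
   Context: Fix a set $\mathit{At}$ of atoms. An explicit literal is $p$ or $\sim p$ for $p\in\mathit{At}$; a set of explicit literals is consistent if it never contains both $p$ and $\sim p$. Formulas: $\varphi ::= p\mid\bot\mid\varphi\wedge\varphi\mid\varphi\vee\varphi\mid\varphi\to\varphi\mid\sim\varphi$; abbreviations $\neg\varphi:=\varphi\to\bot$, $\top:=\neg\bot$, $\varphi\leftrightarrow\psi:=(\varphi\to\psi)\wedge(\psi\to\varphi)$. $\varphi[\alpha/p]$ replaces every occurrence of atom $p$ in $\varphi$ by $\alpha$. An ${\cal X}_5$-interpretation is a pair $\langle H,T\rangle$ of consistent sets of explicit literals with $H\subseteq T$. Satisfaction $\models$ and falsification $=\!\!|\;$: $\langle H,T\rangle\not\models\bot$, $\langle H,T\rangle=\!\!|\;\bot$; $\models p$ iff $p\in H$, $=\!\!|\;p$ iff $\sim p\in H$; $\models\varphi\wedge\psi$ iff both satisfied, $=\!\!|\;\varphi\wedge\psi$ iff at least one falsified; $\models\varphi\vee\psi$ iff at least one satisfied, $=\!\!|\;\varphi\vee\psi$ iff both falsified; $\models\sim\varphi$ iff $=\!\!|\;\varphi$, $=\!\!|\;\sim\varphi$ iff $\models\varphi$; $\langle H,T\rangle\models\varphi\to\psi$ iff (i) $\langle H,T\rangle\not\models\varphi$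 or $\langle H,T\rangle\models\psi$ and (ii) $\langle T,T\rangle\not\models\varphi$ or $\langle T,T\rangle\models\psi$; $\langle H,T\rangle=\!\!|\;\varphi\to\psi$ iff $\langle T,T\rangle\models\varphi$ and $\langle H,T\rangle=\!\!|\;\psi$. A formula is valid if satisfied by every ${\cal X}_5$-interpretation. *)

theory Defs
  imports Main
begin

datatype 'a form =
    Atom 'a
  | Bot
  | Conj "'a form" "'a form"
  | Disj "'a form" "'a form"
  | Impl "'a form" "'a form"
  | Sneg "'a form"

definition Neg :: "'a form \<Rightarrow> 'a form" where
  "Neg \<phi> = Impl \<phi> Bot"

definition Top :: "'a form" where
  "Top = Neg Bot"

definition Iff :: "'a form \<Rightarrow> 'a form \<Rightarrow> 'a form" where
  "Iff \<phi> \<psi> = Conj (Impl \<phi> \<psi>) (Impl \<psi> \<phi>)"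

fun subst :: "'a form \<Rightarrow> 'a form \<Rightarrow> 'a \<Rightarrow> 'a form" where
  "subst (Atom q) \<alpha> p = (if q = p then \<alpha> else Atom q)"
| "subst Bot \<alpha> p = Bot"
| "subst (Conj \<phi> \<psi>) \<alpha> p = Conj (subst \<phi> \<alpha> p) (subst \<psi> \<alpha> p)"
| "subst (Disj \<phi> \<psi>) \<alpha> p = Disj (subst \<phi> \<alpha> p) (subst \<psi> \<alpha> p)"
| "subst (Impl \<phi> \<psi>) \<alpha> p = Impl (subst \<phi> \<alpha> p) (subst \<psi> \<alpha> p)"
| "subst (Sneg \<phi>) \<alpha> p = Sneg (subst \<phi> \<alpha> p)"

fun atoms :: "'a form \<Rightarrow> 'a set" where
  "atoms (Atom q) = {q}"
| "atoms Bot = {}"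
| "atoms (Conj \<phi> \<psi>) = atoms \<phi> \<union> atoms \<psi>"
| "atoms (Disj \<phi> \<psi>) = atoms \<phi> \<union> atoms \<psi>"
| "atoms (Impl \<phi> \<psi>) = atoms \<phi> \<union> atoms \<psi>"
| "atoms (Sneg \<phi>) = atoms \<phi>"

fun outside_sneg :: "'a \<Rightarrow> 'a form \<Rightarrow> bool" where
  "outside_sneg p (Atom q) = True"
| "outside_sneg p Bot = True"
| "outside_sneg p (Conj \<phi> \<psi>) = (outside_sneg p \<phi> \<and> outside_sneg p \<psi>)"
| "outside_sneg p (Disj \<phi> \<psi>) = (outside_sneg p \<phi> \<and> outside_sneg p \<psi>)"
| "outside_sneg p (Impl \<phi> \<psi>) = (outside_sneg p \<phi> \<and> outside_sneg p \<psi>)"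
| "outside_sneg p (Sneg \<phi>) = (p \<notin> atoms \<phi>)"

text \<open>Explicit literals: (p, True) stands for p, (p, False) for ~p.\<close>
type_synonym 'a lit = "'a \<times> bool"

definition consistent :: "'a lit set \<Rightarrow> bool" where
  "consistent S \<longleftrightarrow> (\<forall>p. \<not> ((p, True) \<in> S \<and> (p, False) \<in> S))"

definition X5_interp :: "'a lit set \<Rightarrow> 'a lit set \<Rightarrow> bool" where
  "X5_interp H T \<longleftrightarrow> consistent H \<and> consistent T \<and> H \<subseteq> T"

fun sat :: "'a lit set \<Rightarrow> 'a lit set \<Rightarrow> 'a form \<Rightarrow> bool"
and fal :: "'a lit set \<Rightarrow> 'a lit set \<Rightarrow> 'a form \<Rightarrow> bool" where
  "sat H T (Atom p) = ((p, True) \<in> H)"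
| "sat H T Bot = False"
| "sat H T (Conj \<phi> \<psi>) = (sat H T \<phi> \<and> sat H T \<psi>)"
| "sat H T (Disj \<phi> \<psi>) = (sat H T \<phi> \<or> sat H T \<psi>)"
| "sat H T (Impl \<phi> \<psi>) =
     ((\<not> sat H T \<phi> \<or> sat H T \<psi>) \<and> (\<not> sat T T \<phi> \<or> sat T T \<psi>))"
| "sat H T (Sneg \<phi>) = fal H T \<phi>"
| "fal H T (Atom p) = ((p, False) \<in> H)"
| "fal H T Bot = True"
| "fal H T (Conj \<phi> \<psi>) = (fal H T \<phi> \<or> fal H T \<psi>)"
| "fal H T (Disj \<phi> \<psi>) = (fal H T \<phi> \<and> fal H T \<psi>)"
| "fal H T (Impl \<phi> \<psi>) = (sat T T \<phi> \<and> fal H T \<psi>)"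
| "fal H T (Sneg \<phi>) = sat H T \<phi>"

definition valid :: "'a form \<Rightarrow> bool" where
  "valid \<phi> \<longleftrightarrow> (\<forall>H T. X5_interp H T \<longrightarrow> sat H T \<phi>)"

end

theory Submission
  imports Defs
begin

text \<open>Outside the scope of \<open>\<sim>\<close>, the satisfaction clauses only ever consult satisfaction of
  subformulas, at \<open>\<langle>H,T\<rangle>\<close> and at \<open>\<langle>T,T\<rangle>\<close>; falsification is reached only below \<open>\<sim>\<close>, where
  \<open>p\<close> does not occur. So a structural induction shows that \<open>\<phi>[\<alpha>/p]\<close> and \<open>\<phi>[\<beta>/p]\<close> are satisfied
  by the same interpretations whenever \<open>\<alpha>\<close> and \<open>\<beta>\<close> are, and validity of \<open>\<alpha> \<leftrightarrow> \<beta>\<close> says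
  exactly that \<open>\<alpha>\<close> and \<open>\<beta>\<close> are.\<close>

lemma subst_triv: "p \<notin> atoms \<phi> \<Longrightarrow> subst \<phi> \<alpha> p = \<phi>"
  by (induction \<phi>) auto

lemma X5_interp_there: "X5_interp H T \<Longrightarrow> X5_interp T T"
  unfolding X5_interp_def by auto

lemma valid_Iff_iff_sat_eq:
  "valid (Iff \<alpha> \<beta>) \<longleftrightarrow> (\<forall>H T. X5_interp H T \<longrightarrow> sat H T \<alpha> = sat H T \<beta>)"
  unfolding valid_def Iff_def by (auto dest: X5_interp_there)

lemma sat_subst_cong:
  assumes sat_eq: "\<And>H T. X5_interp H T \<Longrightarrow> sat H T \<alpha> = sat H T \<beta>"
    and "outside_sneg p \<phi>" and "X5_interp H T"
  shows "sat H T (subst \<phi> \<alpha> p) = sat H T (subst \<phi> \<beta> p)"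
  using assms(2,3)
proof (induction \<phi> arbitrary: H T)
  case (Impl \<phi> \<psi>)
  then show ?case by (simp add: X5_interp_there)
qed (auto simp: sat_eq subst_triv)

theorem theorem8:
  fixes \<phi> \<alpha> \<beta> :: "'a form" and p :: 'a
  assumes "outside_sneg p \<phi>"
    and "valid (Iff \<alpha> \<beta>)"
  shows "valid (Iff (subst \<phi> \<alpha> p) (subst \<phi> \<beta> p))"
  using sat_subst_cong[OF _ assms(1)] assms(2)
  unfolding valid_Iff_iff_sat_eq by blast

end
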